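(* Let $T_1,T_2$ be trees on $X$ and let $Y\subseteq X$. Then for every $t\in\{2,3,\dots\}\cup\{\infty\}$, $$d_{\mathrm{MP}}^t(T_1(Y),T_2(Y))=d_{\mathrm{MP}}^t(T_1|_Y,T_2|_Y)\le d_{\mathrm{MP}}^t(T_1,T_2).$$
   Context: A tree on $X$ is an unrooted tree with leaf set $X$ whose internal vertices have degree at most $3$. For $Y\subseteq X$, $T(Y)$ is the smallest subtree of $T$ containing all leaves in $Y$, and $T|_Y$ is obtained from $T(Y)$ by suppressing all degree-2 vertices. A character on $X$ is a map $f:X\to S$ with $S$ nonempty; it is $t$-state if $|S|=t$. An extension $\bar f$ of $f$ labels all vertices by states, agreeing with $f$ on leaves; $\Delta_{\bar f}(T)$ counts edges with differently labelled endpoints; $l_f(T)=\min_{\bar f}\Delta_{\bar f}(T)$. $d_{\mathrm{MP}}^t(T_1,T_2)=\max_f|l_f(T_1)-l_f(T_2)|$ over all $t$-state characters $f$ on the common leaf set (over all characters if $t=\infty$). *)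

theory Defs
  imports Main "HOL-Library.Extended_Nat"
begin

definition ugraph :: "'v set \<Rightarrow> 'v set set \<Rightarrow> bool" where
  "ugraph V E \<longleftrightarrow> finite V \<and> (\<forall>e\<in>E. \<exists>u v. u \<in> V \<and> v \<in> V \<and> u \<noteq> v \<and> e = {u, v})"

definition upath :: "'v set set \<Rightarrow> 'v list \<Rightarrow> bool" where
  "upath E xs \<longleftrightarrow> xs \<noteq> [] \<and> distinct xs \<and> (\<forall>i. Suc i < length xs \<longrightarrow> {xs ! i, xs ! Suc i} \<in> E)"

definition uconnected :: "'v set \<Rightarrow> 'v set set \<Rightarrow> bool" where
  "uconnected V E \<longleftrightarrow>
     (\<forall>u\<in>V. \<forall>v\<in>V. \<exists>xs. upath E xs \<and> set xs \<subseteq> V \<and> hd xs = u \<and> last xs = v)"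

definition ucycle :: "'v set set \<Rightarrow> 'v list \<Rightarrow> bool" where
  "ucycle E xs \<longleftrightarrow> upath E xs \<and> length xs \<ge> 3 \<and> {last xs, hd xs} \<in> E"

definition utree :: "'v set \<Rightarrow> 'v set set \<Rightarrow> bool" where
  "utree V E \<longleftrightarrow> ugraph V E \<and> V \<noteq> {} \<and> uconnected V E \<and> \<not> (\<exists>xs. ucycle E xs)"

definition degree :: "'v set set \<Rightarrow> 'v \<Rightarrow> nat" where
  "degree E v = card {e \<in> E. v \<in> e}"

text \<open>Leaves: vertices of degree at most 1 (degree 0 only for a one-vertex tree).\<close>
definition leaves :: "'v set \<Rightarrow> 'v set set \<Rightarrow> 'v set" where
  "leaves V E = {v \<in> V. degree E v \<le> 1}"

definition tree_on :: "'v set \<Rightarrow> 'v set \<Rightarrow> 'v set set \<Rightarrow> bool" where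
  "tree_on X V E \<longleftrightarrow> utree V E \<and> leaves V E = X \<and> (\<forall>v \<in> V - X. degree E v \<le> 3)"

text \<open>T(Y): the smallest subtree containing Y, i.e. the union of all paths between leaves in Y.\<close>
definition span_verts :: "'v set set \<Rightarrow> 'v set \<Rightarrow> 'v set" where
  "span_verts E Y = {w. \<exists>xs. upath E xs \<and> hd xs \<in> Y \<and> last xs \<in> Y \<and> w \<in> set xs}"

definition span_edges :: "'v set set \<Rightarrow> 'v set \<Rightarrow> 'v set set" where
  "span_edges E Y = {e. \<exists>xs i. upath E xs \<and> hd xs \<in> Y \<and> last xs \<in> Y \<and> Suc i < length xs
                          \<and> e = {xs ! i, xs ! Suc i}}"

definition suppr_verts :: "'v set \<Rightarrow> 'v set set \<Rightarrow> 'v set" where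
  "suppr_verts V E = {v \<in> V. degree E v \<noteq> 2}"

definition suppr_edges :: "'v set \<Rightarrow> 'v set set \<Rightarrow> 'v set set" where
  "suppr_edges V E = {{u, v} | u v. u \<in> suppr_verts V E \<and> v \<in> suppr_verts V E \<and> u \<noteq> v \<and>
      (\<exists>xs. upath E xs \<and> hd xs = u \<and> last xs = v \<and> (\<forall>w \<in> set (butlast (tl xs)). degree E w = 2))}"

text \<open>T|_Y: T(Y) with all degree-2 vertices suppressed.\<close>
definition restr_verts :: "'v set set \<Rightarrow> 'v set \<Rightarrow> 'v set" where
  "restr_verts E Y = suppr_verts (span_verts E Y) (span_edges E Y)"

definition restr_edges :: "'v set set \<Rightarrow> 'v set \<Rightarrow> 'v set set" where
  "restr_edges E Y = suppr_edges (span_verts E Y) (span_edges E Y)"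

definition changes :: "'v set set \<Rightarrow> ('v \<Rightarrow> 's) \<Rightarrow> nat" where
  "changes E g = card {e \<in> E. \<exists>u v. e = {u, v} \<and> g u \<noteq> g v}"

definition pscore :: "'s set \<Rightarrow> ('v \<Rightarrow> 's) \<Rightarrow> 'v set \<Rightarrow> 'v set set \<Rightarrow> nat" where
  "pscore S f V E = (INF g \<in> {g. g ` V \<subseteq> S \<and> (\<forall>x \<in> leaves V E. g x = f x)}. changes E g)"

text \<open>S is a state set of a t-state character (t = \<infinity>: any nonempty state set).
  States are drawn from nat, which is no loss since parsimony is invariant under renaming states.\<close>
definition t_states :: "enat \<Rightarrow> nat set \<Rightarrow> bool" where
  "t_states t S \<longleftrightarrow> S \<noteq> {} \<and> (case t of enat n \<Rightarrow> finite S \<and> card S = n | \<infinity> \<Rightarrow> True)"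

definition dMP :: "enat \<Rightarrow> 'v set \<Rightarrow> 'v set \<Rightarrow> 'v set set \<Rightarrow> 'v set \<Rightarrow> 'v set set \<Rightarrow> nat" where
  "dMP t X V1 E1 V2 E2 =
     Sup {nat \<bar>int (pscore S f V1 E1) - int (pscore S f V2 E2)\<bar> | S f. t_states t S \<and> f ` X \<subseteq> S}"

end

theory Submission
  imports Defs
begin

text \<open>Let min_changes S f V E C be the least number of changes of an extension that agrees
  with f on the vertex set C; the parsimony score is the case C = leaves. For a character on Y,
  the score of T(Y) equals min_changes on all of T with C = Y, because a pendant vertex outside Y
  may copy the state of its neighbour. Fixing the state of one more leaf raises such a minimum by
  0 or 1, and some state leaves it unchanged; hence the leaves of X - Y can be fixed one at a time
  without shrinking the difference of the scores on T1 and T2, which gives the inequality.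
  Suppressing a vertex w of degree 2 with neighbours p and q replaces the path p w q by the edge
  pq without changing any score, since an optimal extension may label w like p; so T(Y) and T|_Y
  have the same scores and hence the same distance.\<close>

section \<open>Parsimony with a set of fixed vertices\<close>

definition extensions :: "'s set \<Rightarrow> ('v \<Rightarrow> 's) \<Rightarrow> 'v set \<Rightarrow> 'v set \<Rightarrow> ('v \<Rightarrow> 's) set" where
  "extensions S f V C = {g. g ` V \<subseteq> S \<and> (\<forall>x \<in> C. g x = f x)}"

text \<open>If there is no extension (S empty, or f leaving S on C), the infimum is the junk value 0;
  hence the hypotheses S \<noteq> {} and f ` C \<subseteq> S below.\<close>
definition min_changes :: "'s set \<Rightarrow> ('v \<Rightarrow> 's) \<Rightarrow> 'v set \<Rightarrow> 'v set set \<Rightarrow> 'v set \<Rightarrow> nat" where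
  "min_changes S f V E C = (INF g \<in> extensions S f V C. changes E g)"

lemma pscore_eq_min_changes: "pscore S f V E = min_changes S f V E (leaves V E)"
  unfolding pscore_def min_changes_def extensions_def ..

lemma extensions_nonempty:
  assumes "f ` C \<subseteq> S" "S \<noteq> {}"
  shows "extensions S f V C \<noteq> {}"
proof -
  obtain s where "s \<in> S" using assms(2) by blast
  then have "(\<lambda>x. if x \<in> C then f x else s) \<in> extensions S f V C"
    using assms(1) unfolding extensions_def by auto
  then show ?thesis by blast
qed

lemma min_changes_le: "g \<in> extensions S f V C \<Longrightarrow> min_changes S f V E C \<le> changes E g"
  unfolding min_changes_def by (rule cINF_lower) simp_all

lemma min_changes_attained:
  assumes "f ` C \<subseteq> S" "S \<noteq> {}"
  obtains g where "g \<in> extensions S f V C" "min_changes S f V E C = changes E g"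
proof -
  have "min_changes S f V E C \<in> changes E ` extensions S f V C"
    unfolding min_changes_def using extensions_nonempty[OF assms] by (intro Inf_nat_def1) auto
  then show ?thesis using that by auto
qed

lemma min_changes_leI:
  assumes "extensions S' f' V' C' \<noteq> {}"
    and "\<And>b. b \<in> extensions S' f' V' C' \<Longrightarrow> \<exists>a \<in> extensions S f V C. changes E a \<le> changes E' b"
  shows "min_changes S f V E C \<le> min_changes S' f' V' E' C'"
  unfolding min_changes_def using assms by (intro cINF_mono) auto

lemma changes_doubleton_iff: "(\<exists>u v. {a, b} = {u, v} \<and> g u \<noteq> g v) \<longleftrightarrow> g a \<noteq> g b"
  by (auto simp: doubleton_eq_iff)

lemma changes_mono: "finite E \<Longrightarrow> F \<subseteq> E \<Longrightarrow> changes F g \<le> changes E g"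
  unfolding changes_def by (intro card_mono) auto

lemma changes_le_card: "finite E \<Longrightarrow> changes E g \<le> card E"
  unfolding changes_def by (intro card_mono) auto

lemma changes_cong:
  assumes "\<And>e x. e \<in> E \<Longrightarrow> x \<in> e \<Longrightarrow> g x = h x"
  shows "changes E g = changes E h"
proof -
  have "(\<exists>u v. e = {u, v} \<and> g u \<noteq> g v) \<longleftrightarrow> (\<exists>u v. e = {u, v} \<and> h u \<noteq> h v)" if "e \<in> E" for e
    using assms[OF that] by (metis insertCI)
  then show ?thesis unfolding changes_def by (metis (no_types, lifting) Collect_cong)
qed

lemma changes_Un_disjoint:
  "finite E \<Longrightarrow> finite F \<Longrightarrow> E \<inter> F = {} \<Longrightarrow> changes (E \<union> F) g = changes E g + changes F g"
  unfolding changes_def by (subst card_Un_disjoint[symmetric]) (auto intro: arg_cong[where f = card])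

lemma changes_singleton: "changes {{p, q}} g = (if g p \<noteq> g q then 1 else 0)"
proof -
  have "{e \<in> {{p, q}}. \<exists>u v. e = {u, v} \<and> g u \<noteq> g v} = (if g p \<noteq> g q then {{p, q}} else {})"
    using changes_doubleton_iff[of p q g] by auto
  then show ?thesis unfolding changes_def by simp
qed

lemma changes_fun_upd_le:
  assumes "finite E" "degree E x \<le> 1"
  shows "changes E (g(x := s)) \<le> changes E g + 1"
proof -
  let ?ch = "\<lambda>g e. \<exists>u v. e = {u, v} \<and> g u \<noteq> g v"
  have "{e \<in> E. ?ch (g(x := s)) e} \<subseteq> {e \<in> E. ?ch g e} \<union> {e \<in> E. x \<in> e}"
  proof
    fix e assume "e \<in> {e \<in> E. ?ch (g(x := s)) e}"
    then obtain u v where "e \<in> E" "e = {u, v}" "(g(x := s)) u \<noteq> (g(x := s)) v" by auto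
    then show "e \<in> {e \<in> E. ?ch g e} \<union> {e \<in> E. x \<in> e}" by (cases "x \<in> e") auto
  qed
  then have "changes E (g(x := s)) \<le> card ({e \<in> E. ?ch g e} \<union> {e \<in> E. x \<in> e})"
    unfolding changes_def using assms(1) by (intro card_mono) auto
  also have "\<dots> \<le> changes E g + degree E x"
    unfolding changes_def degree_def by (rule card_Un_le)
  finally show ?thesis using assms(2) by simp
qed

lemma changes_triangle: "changes {{p, q}} g \<le> changes {{w, p}} g + changes {{w, q}} g"
  by (simp add: changes_singleton)

lemma changes_fun_upd_neighbours_le:
  assumes "finite E" "\<And>e x. e \<in> E \<Longrightarrow> v \<in> e \<Longrightarrow> x \<in> e \<Longrightarrow> x \<noteq> v \<Longrightarrow> b x = c"
  shows "changes E (b(v := c)) \<le> changes {e \<in> E. v \<notin> e} b"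
  unfolding changes_def
proof (rule card_mono)
  show "finite {e \<in> {e \<in> E. v \<notin> e}. \<exists>x y. e = {x, y} \<and> b x \<noteq> b y}" using assms(1) by auto
  show "{e \<in> E. \<exists>x y. e = {x, y} \<and> (b(v := c)) x \<noteq> (b(v := c)) y}
    \<subseteq> {e \<in> {e \<in> E. v \<notin> e}. \<exists>x y. e = {x, y} \<and> b x \<noteq> b y}"
  proof (intro subsetI CollectI conjI)
    fix e assume "e \<in> {e \<in> E. \<exists>x y. e = {x, y} \<and> (b(v := c)) x \<noteq> (b(v := c)) y}"
    then obtain x y where e: "e \<in> E" "e = {x, y}" "(b(v := c)) x \<noteq> (b(v := c)) y" by blast
    show "v \<notin> e"
    proof
      assume "v \<in> e"
      then have "(b(v := c)) u = c" if "u \<in> e" for u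
        using assms(2)[OF e(1) \<open>v \<in> e\<close> that] by (cases "u = v") simp_all
      then show False using e(2,3) by simp
    qed
    then have "x \<noteq> v" "y \<noteq> v" using e(2) by auto
    then have "b x \<noteq> b y" using e(3) by simp
    then show "\<exists>x y. e = {x, y} \<and> b x \<noteq> b y" using e(2) by blast
    show "e \<in> E" by (rule e(1))
  qed
qed

lemma min_changes_mono:
  assumes "V \<subseteq> V'" "E \<subseteq> E'" "finite E'" "f ` C \<subseteq> S" "S \<noteq> {}"
  shows "min_changes S f V E C \<le> min_changes S f V' E' C"
proof (rule min_changes_leI)
  show "extensions S f V' C \<noteq> {}" using extensions_nonempty[OF assms(4,5)] .
  fix b assume "b \<in> extensions S f V' C"
  then have "b \<in> extensions S f V C" using assms(1) unfolding extensions_def by auto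
  then show "\<exists>a \<in> extensions S f V C. changes E a \<le> changes E' b"
    using changes_mono[OF assms(3,2)] by blast
qed

lemma min_changes_insert_ge:
  assumes "f ` C \<subseteq> S" "S \<noteq> {}" "s \<in> S" "x \<notin> C"
  shows "min_changes S f V E C \<le> min_changes S (f(x := s)) V E (insert x C)"
proof (rule min_changes_leI)
  show "extensions S (f(x := s)) V (insert x C) \<noteq> {}"
    using assms by (intro extensions_nonempty) auto
next
  fix b assume "b \<in> extensions S (f(x := s)) V (insert x C)"
  then have "b \<in> extensions S f V C" using assms(4) unfolding extensions_def by auto
  then show "\<exists>a \<in> extensions S f V C. changes E a \<le> changes E b" by blast
qed

lemma min_changes_insert_le:
  assumes "f ` C \<subseteq> S" "S \<noteq> {}" "s \<in> S" "finite E" "degree E x \<le> 1"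
  shows "min_changes S (f(x := s)) V E (insert x C) \<le> min_changes S f V E C + 1"
proof -
  obtain g where g: "g \<in> extensions S f V C" "min_changes S f V E C = changes E g"
    using min_changes_attained[OF assms(1,2)] .
  have "g(x := s) \<in> extensions S (f(x := s)) V (insert x C)"
    using g(1) assms(3) unfolding extensions_def by auto
  then have "min_changes S (f(x := s)) V E (insert x C) \<le> changes E (g(x := s))"
    by (rule min_changes_le)
  also have "\<dots> \<le> changes E g + 1" using changes_fun_upd_le[OF assms(4,5)] .
  finally show ?thesis using g(2) by simp
qed

text \<open>Fix x to the state it has in an optimal extension.\<close>
lemma min_changes_insert_eq:
  assumes "f ` C \<subseteq> S" "S \<noteq> {}" "x \<in> V" "x \<notin> C"
  obtains s where "s \<in> S" "min_changes S (f(x := s)) V E (insert x C) = min_changes S f V E C"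
proof -
  obtain g where g: "g \<in> extensions S f V C" "min_changes S f V E C = changes E g"
    using min_changes_attained[OF assms(1,2)] .
  have s: "g x \<in> S" using g(1) assms(3) unfolding extensions_def by auto
  have "g \<in> extensions S (f(x := g x)) V (insert x C)" using g(1) unfolding extensions_def by auto
  then have "min_changes S (f(x := g x)) V E (insert x C) \<le> min_changes S f V E C"
    using g(2) min_changes_le by metis
  moreover have "min_changes S f V E C \<le> min_changes S (f(x := g x)) V E (insert x C)"
    using min_changes_insert_ge[OF assms(1,2) s assms(4)] .
  ultimately show ?thesis using that s by simp
qed

lemma abs_diff_le_abs_diff_step:
  fixes a1 a2 :: nat and b1 b2 :: "'s \<Rightarrow> nat"
  assumes "\<And>s. s \<in> S \<Longrightarrow> a1 \<le> b1 s \<and> b1 s \<le> a1 + 1"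
    and "\<And>s. s \<in> S \<Longrightarrow> a2 \<le> b2 s \<and> b2 s \<le> a2 + 1"
    and "s1 \<in> S" "b1 s1 = a1" and "s2 \<in> S" "b2 s2 = a2"
  shows "\<exists>s \<in> S. \<bar>int a1 - int a2\<bar> \<le> \<bar>int (b1 s) - int (b2 s)\<bar>"
proof (cases "a2 \<le> a1")
  case True
  show ?thesis
  proof (cases "\<exists>s \<in> S. b1 s = a1 + 1")
    case True
    then obtain s where "s \<in> S" "b1 s = a1 + 1" by blast
    then show ?thesis using assms(2)[of s] \<open>a2 \<le> a1\<close> by (intro bexI[of _ s]) auto
  next
    case False
    then have "b1 s2 = a1" using assms(1)[OF assms(5)] assms(5) by force
    then show ?thesis using assms(5,6) by (intro bexI[of _ s2]) auto
  qed
next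
  case False
  show ?thesis
  proof (cases "\<exists>s \<in> S. b2 s = a2 + 1")
    case True
    then obtain s where "s \<in> S" "b2 s = a2 + 1" by blast
    then show ?thesis using assms(1)[of s] \<open>\<not> a2 \<le> a1\<close> by (intro bexI[of _ s]) auto
  next
    case False
    then have "b2 s1 = a2" using assms(2)[OF assms(3)] assms(3) by force
    then show ?thesis using assms(3,4) by (intro bexI[of _ s1]) auto
  qed
qed

definition min_changes_gap ::
    "'s set \<Rightarrow> ('v \<Rightarrow> 's) \<Rightarrow> 'v set \<Rightarrow> 'v set set \<Rightarrow> 'v set \<Rightarrow> 'v set set \<Rightarrow> 'v set \<Rightarrow> int" where
  "min_changes_gap S f V1 E1 V2 E2 C = \<bar>int (min_changes S f V1 E1 C) - int (min_changes S f V2 E2 C)\<bar>"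

lemma min_changes_gap_insert:
  assumes "f ` C \<subseteq> S" "S \<noteq> {}" "x \<notin> C" "finite E1" "finite E2"
    and "x \<in> V1" "x \<in> V2" "degree E1 x \<le> 1" "degree E2 x \<le> 1"
  shows "\<exists>s \<in> S. min_changes_gap S f V1 E1 V2 E2 C \<le> min_changes_gap S (f(x := s)) V1 E1 V2 E2 (insert x C)"
proof -
  obtain s1 where "s1 \<in> S" "min_changes S (f(x := s1)) V1 E1 (insert x C) = min_changes S f V1 E1 C"
    using min_changes_insert_eq[OF assms(1,2,6,3)] .
  moreover obtain s2 where "s2 \<in> S" "min_changes S (f(x := s2)) V2 E2 (insert x C) = min_changes S f V2 E2 C"
    using min_changes_insert_eq[OF assms(1,2,7,3)] .
  ultimately show ?thesis unfolding min_changes_gap_def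
    using min_changes_insert_ge[OF assms(1,2) _ assms(3)]
      min_changes_insert_le[OF assms(1,2) _ assms(4,8)] min_changes_insert_le[OF assms(1,2) _ assms(5,9)]
    by (intro abs_diff_le_abs_diff_step[where S = S]) simp_all
qed

lemma min_changes_gap_extend:
  assumes "finite D" "D \<inter> C = {}" "f ` C \<subseteq> S" "S \<noteq> {}" "finite E1" "finite E2"
    and "\<And>x. x \<in> D \<Longrightarrow> x \<in> V1 \<and> x \<in> V2 \<and> degree E1 x \<le> 1 \<and> degree E2 x \<le> 1"
  shows "\<exists>f'. f' ` (C \<union> D) \<subseteq> S \<and> min_changes_gap S f V1 E1 V2 E2 C \<le> min_changes_gap S f' V1 E1 V2 E2 (C \<union> D)"
  using assms(1,2,3,7)
proof (induction D arbitrary: C f rule: finite_induct)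
  case empty
  then show ?case by (intro exI[of _ f]) simp
next
  case (insert x D)
  obtain s where s: "s \<in> S" and step: "min_changes_gap S f V1 E1 V2 E2 C \<le> min_changes_gap S (f(x := s)) V1 E1 V2 E2 (insert x C)"
    using min_changes_gap_insert[OF insert.prems(2) assms(4) _ assms(5,6)] insert.prems(1)
      insert.prems(3)[OF insertI1] by blast
  have "D \<inter> insert x C = {}" "(f(x := s)) ` insert x C \<subseteq> S"
    using insert.prems(1,2) insert.hyps(2) s by auto
  moreover have "\<And>y. y \<in> D \<Longrightarrow> y \<in> V1 \<and> y \<in> V2 \<and> degree E1 y \<le> 1 \<and> degree E2 y \<le> 1"
    using insert.prems(3) by blast
  ultimately obtain f' where f': "f' ` (insert x C \<union> D) \<subseteq> S"
    "min_changes_gap S (f(x := s)) V1 E1 V2 E2 (insert x C) \<le> min_changes_gap S f' V1 E1 V2 E2 (insert x C \<union> D)"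
    using insert.IH by blast
  have eq: "insert x C \<union> D = C \<union> insert x D" by auto
  show ?case using conjI[OF f'(1)[unfolded eq] order_trans[OF step f'(2)[unfolded eq]]] by (rule exI[of _ f'])
qed

section \<open>Paths in forests\<close>

definition forest :: "'v set \<Rightarrow> 'v set set \<Rightarrow> bool" where
  "forest V E \<longleftrightarrow> ugraph V E \<and> \<not> (\<exists>xs. ucycle E xs)"

lemma tree_on_forest: "tree_on X V E \<Longrightarrow> forest V E"
  unfolding tree_on_def utree_def forest_def by blast

lemma tree_on_leaves_subset: "tree_on X V E \<Longrightarrow> X \<subseteq> V"
  unfolding tree_on_def leaves_def by blast

lemma tree_on_degree_leaf: "tree_on X V E \<Longrightarrow> x \<in> X \<Longrightarrow> degree E x \<le> 1"
  unfolding tree_on_def leaves_def by blast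

lemma tree_on_leaves: "tree_on X V E \<Longrightarrow> leaves V E = X"
  unfolding tree_on_def by blast

lemma ugraph_finite_edges:
  assumes "ugraph V E"
  shows "finite E"
proof (rule finite_subset)
  show "E \<subseteq> Pow V" and "finite (Pow V)" using assms unfolding ugraph_def by auto
qed

lemma forest_finite: "forest V E \<Longrightarrow> finite V \<and> finite E"
  unfolding forest_def using ugraph_finite_edges unfolding ugraph_def by blast

lemma ugraph_edge_vertex: "ugraph V E \<Longrightarrow> e \<in> E \<Longrightarrow> x \<in> e \<Longrightarrow> x \<in> V"
  unfolding ugraph_def by fastforce

lemma ugraph_edgeE:
  assumes "ugraph V E" "e \<in> E"
  obtains u v where "u \<in> V" "v \<in> V" "u \<noteq> v" "e = {u, v}"
  using assms unfolding ugraph_def by meson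

lemma ugraph_edge_otherE:
  assumes "ugraph V E" "e \<in> E" "x \<in> e"
  obtains y where "y \<in> V" "y \<noteq> x" "e = {x, y}"
proof -
  obtain u v where "u \<in> V" "v \<in> V" "u \<noteq> v" "e = {u, v}" using ugraph_edgeE[OF assms(1,2)] .
  then show ?thesis using that assms(3) by (auto simp: insert_commute)
qed

lemma pendant_edge_unique:
  assumes "finite E" "degree E v \<le> 1" "e1 \<in> E" "e2 \<in> E" "v \<in> e1" "v \<in> e2"
  shows "e1 = e2"
proof -
  have "card {e \<in> E. v \<in> e} \<le> Suc 0" using assms(2) unfolding degree_def by simp
  moreover have "finite {e \<in> E. v \<in> e}" using assms(1) by simp
  ultimately have "\<forall>x \<in> {e \<in> E. v \<in> e}. \<forall>y \<in> {e \<in> E. v \<in> e}. x = y"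
    using card_le_Suc0_iff_eq by blast
  then show ?thesis using assms(3-6) by blast
qed

lemma upath_iff_successively:
  "upath E xs \<longleftrightarrow> xs \<noteq> [] \<and> distinct xs \<and> successively (\<lambda>a b. {a, b} \<in> E) xs"
  unfolding upath_def successively_conv_nth by blast

lemma upath_mono: "upath E xs \<Longrightarrow> E \<subseteq> F \<Longrightarrow> upath F xs"
  unfolding upath_def by blast

lemma ucycle_mono: "ucycle E xs \<Longrightarrow> E \<subseteq> F \<Longrightarrow> ucycle F xs"
  unfolding ucycle_def using upath_mono by blast

lemma upath_singleton [simp]: "upath E [x]"
  unfolding upath_def by auto

lemma upath_edge: "{u, v} \<in> E \<Longrightarrow> u \<noteq> v \<Longrightarrow> upath E [u, v]"
  unfolding upath_def by (auto simp: nth_Cons split: nat.splits)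

lemma upath_rev: "upath E xs \<Longrightarrow> upath E (rev xs)"
  unfolding upath_iff_successively by (auto simp: insert_commute)

lemma upath_snoc: "upath E xs \<Longrightarrow> w \<notin> set xs \<Longrightarrow> {last xs, w} \<in> E \<Longrightarrow> upath E (xs @ [w])"
  unfolding upath_iff_successively by (auto simp: successively_append_iff)

lemma upath_drop:
  assumes "upath E xs" "j < length xs"
  shows "upath E (drop j xs)"
proof -
  have "successively (\<lambda>a b. {a, b} \<in> E) (take j xs @ drop j xs)"
    using assms unfolding upath_iff_successively by simp
  then show ?thesis using assms unfolding upath_iff_successively successively_append_iff by auto
qed

lemma upath_length_ge_2: "upath E xs \<Longrightarrow> hd xs \<noteq> last xs \<Longrightarrow> length xs \<ge> 2"
  unfolding upath_def by (cases xs) (auto simp: Suc_le_eq)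

lemma upath_vertex_in_edge:
  assumes "upath E xs" "length xs \<ge> 2" "x \<in> set xs"
  shows "\<exists>e \<in> E. x \<in> e"
proof -
  obtain i where i: "i < length xs" "xs ! i = x" using assms(3) by (auto simp: in_set_conv_nth)
  show ?thesis
  proof (cases "Suc i < length xs")
    case True
    then show ?thesis using assms(1) i unfolding upath_def by blast
  next
    case False
    then have "Suc (i - 1) < length xs" "Suc (i - 1) = i" using i assms(2) by auto
    then have "{xs ! (i - 1), x} \<in> E" using assms(1) i unfolding upath_def by metis
    then show ?thesis by blast
  qed
qed

lemma upath_set_subset:
  assumes "ugraph V E" "upath E xs" "length xs \<ge> 2"
  shows "set xs \<subseteq> V"
  using upath_vertex_in_edge[OF assms(2,3)] ugraph_edge_vertex[OF assms(1)] by blast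

text \<open>Leaving the last vertex through an edge other than the one just used cannot lead back
  into the path, since that would close a cycle.\<close>
lemma forest_upath_snocE:
  assumes "forest V E" "upath E xs" "length xs \<ge> 2" "degree E (last xs) \<ge> 2"
  obtains w where "upath E (xs @ [w])"
proof -
  have ug: "ugraph V E" and acyclic: "\<not> (\<exists>xs. ucycle E xs)" using assms(1) unfolding forest_def by auto
  define n where "n = length xs"
  define l where "l = last xs"
  define p where "p = xs ! (n - 2)"
  have ln: "l = xs ! (n - 1)" unfolding l_def n_def using assms(3) last_conv_nth[of xs] by fastforce
  have "Suc (n - 2) < length xs" "Suc (n - 2) = n - 1" using assms(3) unfolding n_def by auto
  then have pl: "{p, l} \<in> E" using assms(2) unfolding upath_def p_def ln by metis
  have "\<not> {e \<in> E. l \<in> e} \<subseteq> {{p, l}}"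
  proof
    assume "{e \<in> E. l \<in> e} \<subseteq> {{p, l}}"
    then have "degree E l \<le> 1" unfolding degree_def using card_mono[of "{{p, l}}"] by fastforce
    then show False using assms(4) unfolding l_def by linarith
  qed
  then obtain e where e: "e \<in> E" "l \<in> e" "e \<noteq> {p, l}" by auto
  obtain w where w: "e = {l, w}" "w \<noteq> l" using ugraph_edge_otherE[OF ug e(1,2)] by metis
  have "w \<notin> set xs"
  proof
    assume "w \<in> set xs"
    then obtain j where j: "j < n" "xs ! j = w" unfolding n_def by (auto simp: in_set_conv_nth)
    have "j \<noteq> n - 1" "j \<noteq> n - 2" using j w e ln p_def by auto
    then have "3 \<le> length (drop j xs)" using j n_def by simp
    moreover have "last (drop j xs) = l" "hd (drop j xs) = w"
      using j n_def l_def by (simp_all add: hd_drop_conv_nth)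
    ultimately have "ucycle E (drop j xs)"
      unfolding ucycle_def using upath_drop assms(2) j n_def e w by auto
    then show False using acyclic by blast
  qed
  then show ?thesis using that upath_snoc[OF assms(2)] e w l_def by auto
qed

lemma upath_extend_into:
  assumes "forest V E" and deg: "\<forall>v \<in> V - Y. degree E v \<ge> 2"
  shows "upath E xs \<Longrightarrow> length xs \<ge> 2 \<Longrightarrow> \<exists>zs. upath E (xs @ zs) \<and> last (xs @ zs) \<in> Y"
proof (induction "card V - length xs" arbitrary: xs rule: less_induct)
  case less
  have ug: "ugraph V E" and finV: "finite V" using assms(1) forest_finite unfolding forest_def by auto
  show ?case
  proof (cases "last xs \<in> Y")
    case True
    then show ?thesis by (intro exI[of _ "[]"]) (use less.prems in auto)
  next
    case False
    have "last xs \<in> V" using upath_set_subset[OF ug less.prems] less.prems(2) by (cases xs) auto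
    then obtain w where up: "upath E (xs @ [w])"
      using forest_upath_snocE[OF assms(1) less.prems] deg False by blast
    have "distinct (xs @ [w])" "set (xs @ [w]) \<subseteq> V"
      using up upath_set_subset[OF ug up] less.prems(2) unfolding upath_def by auto
    then have "length (xs @ [w]) \<le> card V" using distinct_card card_mono[OF finV] by metis
    then have "card V - length (xs @ [w]) < card V - length xs" by simp
    then obtain zs where "upath E ((xs @ [w]) @ zs)" "last ((xs @ [w]) @ zs) \<in> Y"
      using less.hyps[of "xs @ [w]"] up less.prems by fastforce
    then show ?thesis by (intro exI[of _ "w # zs"]) auto
  qed
qed

lemma forest_delete_vertex:
  assumes "forest V E"
  shows "forest (V - {v}) {e \<in> E. v \<notin> e}"
  unfolding forest_def
proof (intro conjI notI)
  have ug: "ugraph V E" using assms unfolding forest_def by blast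
  show "ugraph (V - {v}) {e \<in> E. v \<notin> e}" unfolding ugraph_def
  proof (intro conjI ballI)
    show "finite (V - {v})" using ug unfolding ugraph_def by blast
    fix e assume e: "e \<in> {e \<in> E. v \<notin> e}"
    then obtain x y where "x \<in> V" "y \<in> V" "x \<noteq> y" "e = {x, y}" using ugraph_edgeE[OF ug] by blast
    then show "\<exists>x y. x \<in> V - {v} \<and> y \<in> V - {v} \<and> x \<noteq> y \<and> e = {x, y}" using e by blast
  qed
  assume "\<exists>xs. ucycle {e \<in> E. v \<notin> e} xs"
  then show False using assms ucycle_mono[of _ _ E] unfolding forest_def by blast
qed

section \<open>The subtree spanned by a set of leaves\<close>

lemma span_edges_subset: "span_edges E Y \<subseteq> E"
  unfolding span_edges_def upath_def by blast

lemma span_edges_eq_edges: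
  assumes "forest V E" and deg: "\<forall>v \<in> V - Y. degree E v \<ge> 2"
  shows "span_edges E Y = E"
proof
  show "E \<subseteq> span_edges E Y"
  proof
    fix e assume e: "e \<in> E"
    have ug: "ugraph V E" using assms(1) unfolding forest_def by auto
    obtain u v where uv: "e = {u, v}" "u \<noteq> v" using ugraph_edgeE[OF ug e] by metis
    obtain zs where zs: "upath E ([u, v] @ zs)" "last ([u, v] @ zs) \<in> Y"
      using upath_extend_into[OF assms upath_edge] e uv by fastforce
    obtain zs' where zs': "upath E ((rev zs @ [v, u]) @ zs')" "last ((rev zs @ [v, u]) @ zs') \<in> Y"
      using upath_extend_into[OF assms upath_rev[OF zs(1)]] by auto
    define P where "P = rev zs @ [v, u] @ zs'"
    have "hd P = last ([u, v] @ zs)" unfolding P_def by (cases zs rule: rev_cases) (auto simp: hd_rev)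
    then have "hd P \<in> Y" using zs(2) by simp
    moreover have "upath E P" "last P \<in> Y" using zs' unfolding P_def by simp_all
    moreover have "e = {P ! length zs, P ! Suc (length zs)}" "Suc (length zs) < length P"
      unfolding P_def uv(1) by (auto simp: nth_append)
    ultimately show "e \<in> span_edges E Y"
      unfolding span_edges_def by (intro CollectI exI[of _ P] exI[of _ "length zs"]) simp
  qed
qed (rule span_edges_subset)

lemma subset_span_verts: "Y \<subseteq> span_verts E Y"
proof
  fix y assume "y \<in> Y"
  then show "y \<in> span_verts E Y" unfolding span_verts_def by (intro CollectI exI[of _ "[y]"]) simp
qed

lemma span_verts_subset:
  assumes "ugraph V E" "Y \<subseteq> V"
  shows "span_verts E Y \<subseteq> V"
proof
  fix w assume "w \<in> span_verts E Y"
  then obtain xs where xs: "upath E xs" "hd xs \<in> Y" "last xs \<in> Y" "w \<in> set xs"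
    unfolding span_verts_def by blast
  show "w \<in> V"
  proof (cases "length xs \<ge> 2")
    case True
    then show ?thesis using upath_set_subset[OF assms(1) xs(1)] xs(4) by blast
  next
    case False
    then have "w = hd xs" using xs(1,4) unfolding upath_def by (cases xs) (auto simp: Suc_le_eq)
    then show ?thesis using xs(2) assms(2) by auto
  qed
qed

lemma span_edge_vertex:
  assumes "e \<in> span_edges E Y" "x \<in> e"
  shows "x \<in> span_verts E Y"
proof -
  obtain xs i where xs: "upath E xs" "hd xs \<in> Y" "last xs \<in> Y" "Suc i < length xs" "e = {xs ! i, xs ! Suc i}"
    using assms(1) unfolding span_edges_def by blast
  then have "x \<in> set xs" using assms(2) by auto
  then show ?thesis unfolding span_verts_def using xs by blast
qed

lemma span_edges_mono: "E' \<subseteq> E \<Longrightarrow> span_edges E' Y \<subseteq> span_edges E Y"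
  unfolding span_edges_def using upath_mono by blast

lemma span_verts_mono: "E' \<subseteq> E \<Longrightarrow> span_verts E' Y \<subseteq> span_verts E Y"
  unfolding span_verts_def using upath_mono by blast

lemma ugraph_span:
  assumes "ugraph V E" "Y \<subseteq> V"
  shows "ugraph (span_verts E Y) (span_edges E Y)"
  unfolding ugraph_def
proof (intro conjI ballI)
  show "finite (span_verts E Y)"
    using span_verts_subset[OF assms] assms(1) finite_subset unfolding ugraph_def by blast
  fix e assume e: "e \<in> span_edges E Y"
  then obtain xs i where xs: "upath E xs" "Suc i < length xs" "e = {xs ! i, xs ! Suc i}"
    unfolding span_edges_def by blast
  have "xs ! i \<noteq> xs ! Suc i" using xs(1,2) unfolding upath_def by (simp add: nth_eq_iff_index_eq)
  then show "\<exists>u v. u \<in> span_verts E Y \<and> v \<in> span_verts E Y \<and> u \<noteq> v \<and> e = {u, v}"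
    using span_edge_vertex[OF e] xs(3) by blast
qed

lemma forest_span: "forest V E \<Longrightarrow> Y \<subseteq> V \<Longrightarrow> forest (span_verts E Y) (span_edges E Y)"
  unfolding forest_def using ugraph_span span_edges_subset ucycle_mono by metis

lemma degree_span_inner_vertex:
  assumes "finite E" "upath E xs" "hd xs \<in> Y" "last xs \<in> Y" "0 < i" "Suc i < length xs"
  shows "2 \<le> degree (span_edges E Y) (xs ! i)"
proof -
  let ?w = "xs ! i"
  have "{xs ! (i - 1), ?w} \<in> span_edges E Y" unfolding span_edges_def
    using assms(2-6) by (intro CollectI exI[of _ xs] exI[of _ "i - 1"]) auto
  moreover have "{?w, xs ! Suc i} \<in> span_edges E Y" unfolding span_edges_def
    using assms(2-6) by (intro CollectI exI[of _ xs] exI[of _ i]) auto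
  ultimately have "{{xs ! (i - 1), ?w}, {?w, xs ! Suc i}} \<subseteq> {e \<in> span_edges E Y. ?w \<in> e}" by auto
  moreover have "xs ! (i - 1) \<noteq> xs ! Suc i" using assms(2,5,6) unfolding upath_def
    by (simp add: nth_eq_iff_index_eq)
  then have "{xs ! (i - 1), ?w} \<noteq> {?w, xs ! Suc i}" by (auto simp: doubleton_eq_iff)
  then have "card {{xs ! (i - 1), ?w}, {?w, xs ! Suc i}} = 2" by simp
  moreover have "finite {e \<in> span_edges E Y. ?w \<in> e}"
    using finite_subset[OF span_edges_subset assms(1)] by simp
  ultimately show ?thesis unfolding degree_def using card_mono by metis
qed

lemma leaves_span:
  assumes "finite E" "\<forall>y \<in> Y. degree E y \<le> 1"
  shows "leaves (span_verts E Y) (span_edges E Y) = Y"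
proof (intro equalityI subsetI)
  fix y assume y: "y \<in> Y"
  have "degree (span_edges E Y) y \<le> degree E y"
    unfolding degree_def using assms(1) span_edges_subset by (intro card_mono) auto
  then show "y \<in> leaves (span_verts E Y) (span_edges E Y)"
    unfolding leaves_def using y assms(2) subset_span_verts by fastforce
next
  fix w assume w: "w \<in> leaves (span_verts E Y) (span_edges E Y)"
  show "w \<in> Y"
  proof (rule ccontr)
    assume nY: "w \<notin> Y"
    obtain xs where xs: "upath E xs" "hd xs \<in> Y" "last xs \<in> Y" "w \<in> set xs"
      using w unfolding leaves_def span_verts_def by blast
    obtain i where i: "i < length xs" "xs ! i = w" using xs(4) by (auto simp: in_set_conv_nth)
    have ne: "xs \<noteq> []" using xs(1) unfolding upath_def by auto
    have "i \<noteq> 0" using i xs(2) nY ne by (metis hd_conv_nth)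
    moreover have "i \<noteq> length xs - 1" using i xs(3) nY ne by (metis last_conv_nth)
    ultimately have "2 \<le> degree (span_edges E Y) w"
      using degree_span_inner_vertex[OF assms(1) xs(1-3), of i] i by auto
    then show False using w unfolding leaves_def by simp
  qed
qed

lemma min_changes_delete_pendant:
  assumes ug: "ugraph V E" and v: "v \<notin> C" "degree E v \<le> 1" and "f ` C \<subseteq> S" "S \<noteq> {}"
  shows "min_changes S f V E C \<le> min_changes S f (V - {v}) {e \<in> E. v \<notin> e} C"
proof (rule min_changes_leI)
  show "extensions S f (V - {v}) C \<noteq> {}" using extensions_nonempty[OF assms(4,5)] .
  have finE: "finite E" using ugraph_finite_edges[OF ug] .
  fix b assume b: "b \<in> extensions S f (V - {v}) C"
  obtain c where c: "c \<in> S" "\<And>e x. e \<in> E \<Longrightarrow> v \<in> e \<Longrightarrow> x \<in> e \<Longrightarrow> x \<noteq> v \<Longrightarrow> b x = c"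
  proof (cases "\<exists>e0 \<in> E. v \<in> e0")
    case True
    then obtain e0 where e0: "e0 \<in> E" "v \<in> e0" by blast
    obtain w where w: "w \<in> V" "w \<noteq> v" "e0 = {v, w}" using ugraph_edge_otherE[OF ug e0] .
    show ?thesis
    proof (rule that)
      show "b w \<in> S" using b w(1,2) unfolding extensions_def by auto
      fix e x assume "e \<in> E" "v \<in> e" "x \<in> e" "x \<noteq> v"
      moreover have "e = e0" using pendant_edge_unique[OF finE v(2) \<open>e \<in> E\<close> e0(1) \<open>v \<in> e\<close> e0(2)] .
      ultimately show "b x = b w" using w(3) by simp
    qed
  next
    case False
    obtain s where "s \<in> S" using assms(5) by blast
    then show ?thesis using False that by blast
  qed
  have "b(v := c) \<in> extensions S f V C" using b c v(1) unfolding extensions_def by auto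
  moreover have "changes E (b(v := c)) \<le> changes {e \<in> E. v \<notin> e} b"
    using changes_fun_upd_neighbours_le[OF finE c(2)] .
  ultimately show "\<exists>a \<in> extensions S f V C. changes E a \<le> changes {e \<in> E. v \<notin> e} b" by blast
qed

lemma min_changes_le_span_no_pendant:
  assumes "forest V E" "Y \<subseteq> V" "S \<noteq> {}" "f ` Y \<subseteq> S" and deg: "\<forall>v \<in> V - Y. degree E v \<ge> 2"
  shows "min_changes S f V E Y \<le> min_changes S f (span_verts E Y) (span_edges E Y) Y"
proof (rule min_changes_leI)
  show "extensions S f (span_verts E Y) Y \<noteq> {}" using extensions_nonempty[OF assms(4,3)] .
  obtain c where c: "c \<in> S" using assms(3) by blast
  fix b assume b: "b \<in> extensions S f (span_verts E Y) Y"
  define a where "a = (\<lambda>x. if x \<in> span_verts E Y then b x else c)"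
  have ext: "a \<in> extensions S f V Y"
    using b c subset_span_verts[of Y E] unfolding extensions_def a_def by auto
  have span: "span_edges E Y = E" using span_edges_eq_edges[OF assms(1) deg] .
  have "changes E a = changes E b"
  proof (rule changes_cong)
    fix e x assume "e \<in> E" "x \<in> e"
    then show "a x = b x" using span_edge_vertex[of e E Y x, unfolded span] unfolding a_def by simp
  qed
  then show "\<exists>a \<in> extensions S f V Y. changes E a \<le> changes (span_edges E Y) b"
    using ext unfolding span by (intro bexI[of _ a]) simp_all
qed

text \<open>Deleting pendant vertices outside Y one at a time never decreases the score and ends
  in a forest with no pendant vertex outside Y, which is its own span.\<close>
lemma min_changes_le_span:
  "forest V E \<Longrightarrow> Y \<subseteq> V \<Longrightarrow> S \<noteq> {} \<Longrightarrow> f ` Y \<subseteq> S \<Longrightarrow>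
   min_changes S f V E Y \<le> min_changes S f (span_verts E Y) (span_edges E Y) Y"
proof (induction "card V" arbitrary: V E rule: less_induct)
  case less
  have ug: "ugraph V E" using less.prems(1) unfolding forest_def by blast
  have fin: "finite V" "finite E" using forest_finite[OF less.prems(1)] by auto
  show ?case
  proof (cases "\<exists>v \<in> V - Y. degree E v \<le> 1")
    case True
    then obtain v where v: "v \<in> V" "v \<notin> Y" "degree E v \<le> 1" by blast
    let ?E' = "{e \<in> E. v \<notin> e}"
    have "min_changes S f V E Y \<le> min_changes S f (V - {v}) ?E' Y"
      using min_changes_delete_pendant[OF ug v(2,3) less.prems(4,3)] .
    also have "\<dots> \<le> min_changes S f (span_verts ?E' Y) (span_edges ?E' Y) Y"
    proof (rule less.hyps[OF card_Diff1_less[OF fin(1) v(1)] forest_delete_vertex[OF less.prems(1)]])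
      show "Y \<subseteq> V - {v}" using less.prems(2) v(2) by blast
    qed (use less.prems(3,4) in auto)
    also have "\<dots> \<le> min_changes S f (span_verts E Y) (span_edges E Y) Y"
    proof (rule min_changes_mono)
      have "?E' \<subseteq> E" by blast
      then show "span_verts ?E' Y \<subseteq> span_verts E Y" "span_edges ?E' Y \<subseteq> span_edges E Y"
        by (rule span_verts_mono, rule span_edges_mono)
      show "finite (span_edges E Y)" using finite_subset[OF span_edges_subset fin(2)] .
    qed (use less.prems(3,4) in auto)
    finally show ?thesis .
  next
    case False
    then have "\<forall>v \<in> V - Y. degree E v \<ge> 2" by (metis Suc_1 not_less_eq_eq)
    then show ?thesis by (rule min_changes_le_span_no_pendant[OF less.prems])
  qed
qed

lemma leaves_span_tree_on:
  assumes "tree_on X V E" "Y \<subseteq> X"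
  shows "leaves (span_verts E Y) (span_edges E Y) = Y"
  using leaves_span[of E Y] forest_finite[OF tree_on_forest[OF assms(1)]] tree_on_degree_leaf[OF assms(1)] assms(2)
  by blast

lemma min_changes_eq_pscore_span:
  assumes "tree_on X V E" "Y \<subseteq> X" "S \<noteq> {}" "f ` Y \<subseteq> S"
  shows "min_changes S f V E Y = pscore S f (span_verts E Y) (span_edges E Y)"
proof -
  have forest: "forest V E" and YV: "Y \<subseteq> V"
    using tree_on_forest[OF assms(1)] tree_on_leaves_subset[OF assms(1)] assms(2) by auto
  have ug: "ugraph V E" and finE: "finite E" using forest forest_finite unfolding forest_def by auto
  have "min_changes S f (span_verts E Y) (span_edges E Y) Y \<le> min_changes S f V E Y"
    by (rule min_changes_mono[OF span_verts_subset[OF ug YV] span_edges_subset finE assms(4,3)])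
  then show ?thesis
    using min_changes_le_span[OF forest YV assms(3,4)]
    unfolding pscore_eq_min_changes leaves_span_tree_on[OF assms(1,2)] by linarith
qed

section \<open>Suppressing vertices of degree 2\<close>

lemma not_successively_split:
  assumes "\<not> successively P xs"
  obtains as bs where "xs = as @ bs" "as \<noteq> []" "bs \<noteq> []" "\<not> P (last as) (hd bs)"
proof -
  have "\<exists>as bs. xs = as @ bs \<and> as \<noteq> [] \<and> bs \<noteq> [] \<and> \<not> P (last as) (hd bs)"
    using assms
  proof (induction xs rule: induct_list012)
    case (3 a b zs)
    show ?case
    proof (cases "P a b")
      case False
      then show ?thesis by (intro exI[of _ "[a]"] exI[of _ "b # zs"]) auto
    next
      case True
      then obtain as bs where "b # zs = as @ bs" "as \<noteq> []" "bs \<noteq> []" "\<not> P (last as) (hd bs)"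
        using "3.IH"(2) "3.prems" by auto
      then show ?thesis by (intro exI[of _ "a # as"] exI[of _ bs]) auto
    qed
  qed auto
  then show ?thesis using that by blast
qed

lemma set_butlast_tl: "distinct xs \<Longrightarrow> set (butlast (tl xs)) = set xs - {hd xs, last xs}"
proof (induction xs)
  case (Cons a ys)
  then show ?case by (cases ys rule: rev_cases) auto
qed simp

lemma distinct_hd_eq_last: "distinct xs \<Longrightarrow> xs \<noteq> [] \<Longrightarrow> hd xs = last xs \<Longrightarrow> length xs = 1"
  by (cases xs rule: rev_cases) (auto simp: hd_append split: if_splits)

definition degree2_path :: "'v set set \<Rightarrow> 'v \<Rightarrow> 'v \<Rightarrow> bool" where
  "degree2_path E u v \<longleftrightarrow>
     (\<exists>xs. upath E xs \<and> hd xs = u \<and> last xs = v \<and> (\<forall>x \<in> set (butlast (tl xs)). degree E x = 2))"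

lemma suppr_edges_degree2_path:
  "suppr_edges V E = {{u, v} | u v. u \<in> suppr_verts V E \<and> v \<in> suppr_verts V E \<and> u \<noteq> v \<and> degree2_path E u v}"
  unfolding suppr_edges_def degree2_path_def ..

lemma degree2_path_iff:
  "degree2_path E u v \<longleftrightarrow>
     (\<exists>xs. upath E xs \<and> hd xs = u \<and> last xs = v \<and> (\<forall>x \<in> set xs - {u, v}. degree E x = 2))"
proof -
  have "set (butlast (tl xs)) = set xs - {u, v}" if "upath E xs" "hd xs = u" "last xs = v" for xs
    using set_butlast_tl[of xs] that unfolding upath_def by simp
  then show ?thesis unfolding degree2_path_def by (intro iffI; elim exE; metis)
qed

locale degree2_vertex =
  fixes V :: "'v set" and E :: "'v set set" and w p q :: 'v
  assumes forest: "forest V E" and w_in_V: "w \<in> V" and edge_wp: "{w, p} \<in> E" and edge_wq: "{w, q} \<in> E"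
    and p_ne_q: "p \<noteq> q" and degree_w: "degree E w = 2"
begin

definition V' :: "'v set" where "V' = V - {w}"
definition E' :: "'v set set" where "E' = insert {p, q} {e \<in> E. w \<notin> e}"

lemma ugraph: "ugraph V E" and acyclic: "\<not> ucycle E xs" and finite_V: "finite V" and finite_E: "finite E"
  using forest forest_finite unfolding forest_def by auto

lemma w_ne_p: "w \<noteq> p" and w_ne_q: "w \<noteq> q"
  using ugraph_edgeE[OF ugraph edge_wp] ugraph_edgeE[OF ugraph edge_wq] by (metis doubleton_eq_iff)+

lemma p_in_V: "p \<in> V" and q_in_V: "q \<in> V"
  using ugraph_edge_vertex[OF ugraph] edge_wp edge_wq by blast+

lemma edges_at_w: "{e \<in> E. w \<in> e} = {{w, p}, {w, q}}"
proof -
  have sub: "{{w, p}, {w, q}} \<subseteq> {e \<in> E. w \<in> e}" using edge_wp edge_wq by simp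
  have "{w, p} \<noteq> {w, q}" using p_ne_q by (simp add: doubleton_eq_iff)
  then have "card {{w, p}, {w, q}} = card {e \<in> E. w \<in> e}" using degree_w unfolding degree_def by simp
  then show ?thesis using card_subset_eq[OF _ sub] finite_E by simp
qed

lemma pq_notin_E: "{p, q} \<notin> E"
proof
  assume "{p, q} \<in> E"
  then have "ucycle E [p, w, q]" unfolding ucycle_def upath_def
    using edge_wp edge_wq p_ne_q w_ne_p w_ne_q by (auto simp: nth_Cons insert_commute split: nat.splits)
  then show False using acyclic by simp
qed

lemma E_decomp: "E = {e \<in> E. w \<notin> e} \<union> {{w, p}, {w, q}}"
  using edges_at_w by blast

lemma E'_decomp: "E' = {e \<in> E. w \<notin> e} \<union> {{p, q}}"
  unfolding E'_def by blast

lemma degree_E':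
  assumes "v \<noteq> w"
  shows "degree E' v = degree E v"
proof -
  let ?R = "{e \<in> E. w \<notin> e \<and> v \<in> e}"
  have fR: "finite ?R" using finite_E by simp
  have "card {e \<in> {{w, p}, {w, q}}. v \<in> e} = card {e \<in> {{p, q}}. v \<in> e}"
  proof -
    consider "v = p" | "v = q" | "v \<noteq> p" "v \<noteq> q" by blast
    then show ?thesis
    proof cases
      case 1
      then have "v \<in> {p, q}" by simp
      from 1 have "{e \<in> {{w, p}, {w, q}}. v \<in> e} = {{w, p}}" using p_ne_q w_ne_p by auto
      moreover have "{e \<in> {{p, q}}. v \<in> e} = {{p, q}}" using \<open>v \<in> {p, q}\<close> by auto
      ultimately show ?thesis by simp
    next
      case 2
      then have "v \<in> {p, q}" by simp
      from 2 have "{e \<in> {{w, p}, {w, q}}. v \<in> e} = {{w, q}}" using p_ne_q w_ne_q by auto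
      moreover have "{e \<in> {{p, q}}. v \<in> e} = {{p, q}}" using \<open>v \<in> {p, q}\<close> by auto
      ultimately show ?thesis by simp
    next
      case 3
      then have none: "{e \<in> {{w, p}, {w, q}}. v \<in> e} = {}" "{e \<in> {{p, q}}. v \<in> e} = {}"
        using assms by auto
      show ?thesis unfolding none ..
    qed
  qed
  moreover have "{e \<in> E. v \<in> e} = ?R \<union> {e \<in> {{w, p}, {w, q}}. v \<in> e}" using E_decomp by blast
  moreover have "{e \<in> E'. v \<in> e} = ?R \<union> {e \<in> {{p, q}}. v \<in> e}" using E'_decomp by blast
  moreover have "card (?R \<union> {e \<in> {{w, p}, {w, q}}. v \<in> e}) = card ?R + card {e \<in> {{w, p}, {w, q}}. v \<in> e}"
    using fR by (intro card_Un_disjoint) auto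
  moreover have "card (?R \<union> {e \<in> {{p, q}}. v \<in> e}) = card ?R + card {e \<in> {{p, q}}. v \<in> e}"
    using fR pq_notin_E by (intro card_Un_disjoint) auto
  ultimately show ?thesis unfolding degree_def by simp
qed

lemma successively_E':
  "successively (\<lambda>a b. {a, b} \<in> E) zs \<Longrightarrow> w \<notin> set zs \<Longrightarrow> successively (\<lambda>a b. {a, b} \<in> E') zs"
  by (erule successively_mono) (auto simp: E'_def)

lemma successively_E:
  assumes "successively (\<lambda>a b. {a, b} \<in> E') zs" "p \<notin> set zs \<or> q \<notin> set zs"
  shows "successively (\<lambda>a b. {a, b} \<in> E) zs"
proof (rule successively_mono[OF assms(1)])
  fix x y assume "x \<in> set zs" "y \<in> set zs" "{x, y} \<in> E'"
  moreover then have "{x, y} \<noteq> {p, q}" using assms(2) by (auto simp: doubleton_eq_iff)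
  ultimately show "{x, y} \<in> E" unfolding E'_def by blast
qed

lemma w_notin_upath_E':
  assumes "upath E' ys" "length ys \<ge> 2"
  shows "w \<notin> set ys"
proof
  assume "w \<in> set ys"
  then obtain e where "e \<in> E'" "w \<in> e" using upath_vertex_in_edge[OF assms] by blast
  then show False using w_ne_p w_ne_q unfolding E'_def by auto
qed

lemma upath_bypass_w:
  assumes "upath E xs" "w \<in> set xs" "hd xs \<noteq> w" "last xs \<noteq> w"
  obtains as bs where "xs = as @ w # bs" "as \<noteq> []" "bs \<noteq> []" "upath E' (as @ bs)"
proof -
  obtain as bs where xs: "xs = as @ w # bs" using split_list[OF assms(2)] by blast
  have ne: "as \<noteq> []" "bs \<noteq> []" using assms(3,4) xs by auto
  have d: "distinct (as @ w # bs)" using assms(1) xs unfolding upath_def by simp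
  have "successively (\<lambda>a b. {a, b} \<in> E) (as @ [w] @ bs)"
    using assms(1) xs unfolding upath_iff_successively by simp
  then have s: "successively (\<lambda>a b. {a, b} \<in> E) as" "successively (\<lambda>a b. {a, b} \<in> E) bs"
    and e: "{last as, w} \<in> E" "{w, hd bs} \<in> E"
    using ne unfolding successively_append_iff by (auto simp: successively_Cons)
  have "{last as, w} \<in> {e \<in> E. w \<in> e}" "{w, hd bs} \<in> {e \<in> E. w \<in> e}" using e by auto
  then have "last as = p \<or> last as = q" "hd bs = p \<or> hd bs = q"
    unfolding edges_at_w using w_ne_p w_ne_q by (auto simp: doubleton_eq_iff)
  moreover have "last as \<noteq> hd bs" using d ne by (metis disjoint_iff distinct_append hd_in_set last_in_set
      list.set_intros(2))
  ultimately have "{last as, hd bs} = {p, q}" by (auto simp: insert_commute)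
  then have "{last as, hd bs} \<in> E'" unfolding E'_def by simp
  moreover have "successively (\<lambda>a b. {a, b} \<in> E') as" "successively (\<lambda>a b. {a, b} \<in> E') bs"
    using successively_E'[OF s(1)] successively_E'[OF s(2)] d by auto
  ultimately have "successively (\<lambda>a b. {a, b} \<in> E') (as @ bs)"
    unfolding successively_append_iff by blast
  then have "upath E' (as @ bs)" using d ne(1) unfolding upath_iff_successively by simp
  then show ?thesis by (rule that[OF xs ne])
qed

lemma upath_through_w:
  assumes "upath E' (as @ bs)" "as \<noteq> []" "bs \<noteq> []" "{last as, hd bs} = {p, q}" "w \<notin> set (as @ bs)"
  shows "upath E (as @ w # bs)"
proof -
  have d: "distinct (as @ bs)" using assms(1) unfolding upath_def by simp
  have s: "successively (\<lambda>a b. {a, b} \<in> E') as" "successively (\<lambda>a b. {a, b} \<in> E') bs"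
    using assms(1) unfolding upath_iff_successively successively_append_iff by auto
  have lab: "(last as = p \<and> hd bs = q) \<or> (last as = q \<and> hd bs = p)"
    using assms(4) by (auto simp: doubleton_eq_iff)
  moreover have "last as \<in> set as" "hd bs \<in> set bs" "set as \<inter> set bs = {}" using d assms(2,3) by auto
  ultimately have "p \<notin> set as \<or> q \<notin> set as" "p \<notin> set bs \<or> q \<notin> set bs" by blast+
  then have "successively (\<lambda>a b. {a, b} \<in> E) as" "successively (\<lambda>a b. {a, b} \<in> E) bs"
    using successively_E[OF s(1)] successively_E[OF s(2)] by simp_all
  moreover have "{last as, w} \<in> E" "{w, hd bs} \<in> E" using lab edge_wp edge_wq by (auto simp: insert_commute)
  ultimately have "successively (\<lambda>a b. {a, b} \<in> E) (as @ [w] @ bs)"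
    unfolding successively_append_iff using assms(3) by (auto simp: successively_Cons)
  moreover have "distinct (as @ w # bs)" using d assms(5) by auto
  ultimately show ?thesis unfolding upath_iff_successively by simp
qed

lemma upath_E'_not_E:
  assumes "upath E' ys" "\<not> successively (\<lambda>a b. {a, b} \<in> E) ys"
  obtains as bs where "ys = as @ bs" "as \<noteq> []" "bs \<noteq> []" "{last as, hd bs} = {p, q}"
proof -
  obtain as bs where ab: "ys = as @ bs" "as \<noteq> []" "bs \<noteq> []" "{last as, hd bs} \<notin> E"
    using not_successively_split[OF assms(2)] .
  have "successively (\<lambda>a b. {a, b} \<in> E') (as @ bs)"
    using assms(1) ab unfolding upath_iff_successively by simp
  then have "{last as, hd bs} \<in> E'" using ab(2,3) unfolding successively_append_iff by blast
  then have "{last as, hd bs} = {p, q}" using ab(4) unfolding E'_def by blast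
  then show ?thesis by (rule that[OF ab(1-3)])
qed

lemma ugraph_E': "ugraph V' E'"
  unfolding ugraph_def
proof (intro conjI ballI)
  show "finite V'" unfolding V'_def using finite_V by simp
  fix e assume "e \<in> E'"
  then consider "e = {p, q}" | "e \<in> E" "w \<notin> e" unfolding E'_def by blast
  then show "\<exists>u v. u \<in> V' \<and> v \<in> V' \<and> u \<noteq> v \<and> e = {u, v}"
  proof cases
    case 1
    then show ?thesis using p_in_V q_in_V p_ne_q w_ne_p w_ne_q unfolding V'_def by blast
  next
    case 2
    obtain u v where "u \<in> V" "v \<in> V" "u \<noteq> v" "e = {u, v}" using ugraph_edgeE[OF ugraph 2(1)] .
    then show ?thesis using 2(2) unfolding V'_def by blast
  qed
qed

lemma no_ucycle_E'_in_E:
  assumes "ucycle E' ys" "successively (\<lambda>a b. {a, b} \<in> E) ys"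
  shows False
proof -
  have up: "upath E' ys" and len: "length ys \<ge> 3" and closing: "{last ys, hd ys} \<in> E'"
    using assms(1) unfolding ucycle_def by auto
  have wn: "w \<notin> set ys" using w_notin_upath_E'[OF up] len by simp
  have upE: "upath E ys" using up assms(2) unfolding upath_iff_successively by simp
  show False
  proof (cases "{last ys, hd ys} \<in> E")
    case True
    then have "ucycle E ys" using upE len unfolding ucycle_def by simp
    then show False using acyclic by simp
  next
    case False
    then have "{last ys, hd ys} = {p, q}" using closing unfolding E'_def by blast
    then have "{last ys, w} \<in> E" "{w, hd ys} \<in> E"
      using edge_wp edge_wq by (auto simp: doubleton_eq_iff insert_commute)
    then have "ucycle E (ys @ [w])"
      using upath_snoc[OF upE wn] len up unfolding ucycle_def upath_def by simp
    then show False using acyclic by simp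
  qed
qed

lemma no_ucycle_E'_through_pq:
  assumes "ucycle E' ys" "\<not> successively (\<lambda>a b. {a, b} \<in> E) ys"
  shows False
proof -
  have up: "upath E' ys" and len: "length ys \<ge> 3" and closing: "{last ys, hd ys} \<in> E'"
    using assms(1) unfolding ucycle_def by auto
  have wn: "w \<notin> set ys" using w_notin_upath_E'[OF up] len by simp
  obtain as bs where ab: "ys = as @ bs" "as \<noteq> []" "bs \<noteq> []" "{last as, hd bs} = {p, q}"
    using upath_E'_not_E[OF up assms(2)] .
  have upw: "upath E (as @ w # bs)" using upath_through_w[OF _ ab(2,3,4)] up ab(1) wn by simp
  have da: "distinct as" "distinct bs" "set as \<inter> set bs = {}" using up ab(1) unfolding upath_def by auto
  have "{last bs, hd as} \<noteq> {p, q}"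
  proof
    assume "{last bs, hd as} = {p, q}"
    moreover have "hd as \<noteq> hd bs" using da ab(2,3) by (metis disjoint_iff hd_in_set)
    ultimately have "hd as = last as" "last bs = hd bs" using ab(4) by (auto simp: doubleton_eq_iff)
    then have "length as = 1" "length bs = 1" using distinct_hd_eq_last da ab(2,3) by metis+
    then show False using len ab(1) by simp
  qed
  moreover have "{last ys, hd ys} = {last bs, hd as}" using ab by (simp add: insert_commute)
  ultimately have "{last (as @ w # bs), hd (as @ w # bs)} \<in> E"
    using closing ab(2,3) unfolding E'_def by auto
  then have "ucycle E (as @ w # bs)" using upw len ab(1) unfolding ucycle_def by simp
  then show False using acyclic by simp
qed

text \<open>A cycle of the contracted graph either avoids the new edge pq, or runs through it and is
  turned into a cycle of the original forest by the detour through w.\<close>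
lemma acyclic_E': "\<not> ucycle E' ys"
  using no_ucycle_E'_in_E no_ucycle_E'_through_pq by blast

lemma forest_E': "forest V' E'"
  unfolding forest_def using ugraph_E' acyclic_E' by blast

lemma leaves_E': "leaves V' E' = leaves V E"
proof -
  have "v \<in> V - {w} \<and> degree E' v \<le> 1 \<longleftrightarrow> v \<in> V \<and> degree E v \<le> 1" for v
    using degree_E'[of v] degree_w by (cases "v = w") auto
  then show ?thesis unfolding leaves_def V'_def by blast
qed

lemma suppr_verts_E': "suppr_verts V' E' = suppr_verts V E"
proof -
  have "v \<in> V - {w} \<and> degree E' v \<noteq> 2 \<longleftrightarrow> v \<in> V \<and> degree E v \<noteq> 2" for v
    using degree_E'[of v] degree_w by (cases "v = w") auto
  then show ?thesis unfolding suppr_verts_def V'_def by blast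
qed

lemma card_degree2_E'_less: "card {v \<in> V'. degree E' v = 2} < card {v \<in> V. degree E v = 2}"
proof -
  have "{v \<in> V'. degree E' v = 2} = {v \<in> V. degree E v = 2} - {w}"
    unfolding V'_def using degree_E' by auto
  moreover have "w \<in> {v \<in> V. degree E v = 2}" using w_in_V degree_w by simp
  moreover have "finite {v \<in> V. degree E v = 2}" using finite_V by simp
  ultimately show ?thesis using card_Diff1_less by metis
qed

lemma changes_E: "changes E g = changes {e \<in> E. w \<notin> e} g + changes {{w, p}} g + changes {{w, q}} g"
proof -
  let ?R = "{e \<in> E. w \<notin> e}"
  have "{w, p} \<noteq> {w, q}" using p_ne_q by (simp add: doubleton_eq_iff)
  then have "changes (?R \<union> {{w, p}} \<union> {{w, q}}) g = changes (?R \<union> {{w, p}}) g + changes {{w, q}} g"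
    using finite_E by (intro changes_Un_disjoint) auto
  also have "changes (?R \<union> {{w, p}}) g = changes ?R g + changes {{w, p}} g"
    using finite_E by (intro changes_Un_disjoint) auto
  also have "?R \<union> {{w, p}} \<union> {{w, q}} = E" using E_decomp by blast
  finally show ?thesis .
qed

lemma changes_E': "changes E' g = changes {e \<in> E. w \<notin> e} g + changes {{p, q}} g"
  unfolding E'_decomp using finite_E pq_notin_E by (subst changes_Un_disjoint) auto

lemma min_changes_E':
  assumes "w \<notin> C" "f ` C \<subseteq> S" "S \<noteq> {}"
  shows "min_changes S f V E C = min_changes S f V' E' C"
proof (rule antisym)
  show "min_changes S f V E C \<le> min_changes S f V' E' C"
  proof (rule min_changes_leI)
    show "extensions S f V' C \<noteq> {}" using extensions_nonempty[OF assms(2,3)] .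
    fix b assume b: "b \<in> extensions S f V' C"
    have "p \<in> V'" using p_in_V w_ne_p unfolding V'_def by auto
    then have "b(w := b p) \<in> extensions S f V C" using b assms(1) unfolding extensions_def V'_def by auto
    moreover have "changes E (b(w := b p)) = changes E' b"
    proof -
      have "changes {e \<in> E. w \<notin> e} (b(w := b p)) = changes {e \<in> E. w \<notin> e} b"
        by (rule changes_cong) auto
      then show ?thesis unfolding changes_E changes_E' using w_ne_p w_ne_q by (simp add: changes_singleton)
    qed
    ultimately show "\<exists>a \<in> extensions S f V C. changes E a \<le> changes E' b" by (metis order_refl)
  qed
  show "min_changes S f V' E' C \<le> min_changes S f V E C"
  proof (rule min_changes_leI)
    show "extensions S f V C \<noteq> {}" using extensions_nonempty[OF assms(2,3)] .
    fix b assume "b \<in> extensions S f V C"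
    then have "b \<in> extensions S f V' C" unfolding extensions_def V'_def by auto
    moreover have "changes E' b \<le> changes E b"
      unfolding changes_E changes_E' using changes_triangle[of p q b w] by simp
    ultimately show "\<exists>a \<in> extensions S f V' C. changes E' a \<le> changes E b" by blast
  qed
qed

lemma pscore_E':
  assumes "f ` leaves V E \<subseteq> S" "S \<noteq> {}"
  shows "pscore S f V E = pscore S f V' E'"
proof -
  have "w \<notin> leaves V E" unfolding leaves_def using degree_w by simp
  then show ?thesis unfolding pscore_eq_min_changes leaves_E' using min_changes_E' assms by blast
qed

lemma degree2_path_E':
  assumes "u \<noteq> w" "v \<noteq> w" "degree2_path E u v"
  shows "degree2_path E' u v"
proof -
  obtain xs where xs: "upath E xs" "hd xs = u" "last xs = v"
    and inner: "\<forall>x \<in> set xs - {u, v}. degree E x = 2"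
    using assms(3) unfolding degree2_path_iff by blast
  have d: "distinct xs" "xs \<noteq> []" using xs(1) unfolding upath_def by auto
  show ?thesis
  proof (cases "w \<in> set xs")
    case False
    then have "upath E' xs"
      using successively_E' xs(1) d unfolding upath_iff_successively by blast
    moreover have "\<forall>x \<in> set xs - {u, v}. degree E' x = 2"
    proof
      fix x assume "x \<in> set xs - {u, v}"
      moreover from this have "x \<noteq> w" using False by auto
      ultimately show "degree E' x = 2" using inner degree_E' by simp
    qed
    ultimately show ?thesis unfolding degree2_path_iff using xs(2,3) by blast
  next
    case True
    have "hd xs \<noteq> w" "last xs \<noteq> w" using assms(1,2) xs(2,3) by simp_all
    then obtain as bs where ab: "xs = as @ w # bs" "as \<noteq> []" "bs \<noteq> []" "upath E' (as @ bs)"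
      using upath_bypass_w[OF xs(1) True] by blast
    have "w \<notin> set (as @ bs)" using d(1) ab(1) by simp
    have "\<forall>x \<in> set (as @ bs) - {u, v}. degree E' x = 2"
    proof
      fix x assume x: "x \<in> set (as @ bs) - {u, v}"
      then have "x \<noteq> w" using \<open>w \<notin> set (as @ bs)\<close> by auto
      moreover have "x \<in> set xs - {u, v}" using x ab(1) by auto
      ultimately show "degree E' x = 2" using inner degree_E' by simp
    qed
    moreover have "hd (as @ bs) = u" "last (as @ bs) = v" using ab(1-3) xs(2,3) by simp_all
    ultimately show ?thesis unfolding degree2_path_iff using ab(4) by blast
  qed
qed

lemma degree2_path_E:
  assumes "u \<noteq> v" "degree2_path E' u v"
  shows "degree2_path E u v"
proof -
  obtain ys where ys: "upath E' ys" "hd ys = u" "last ys = v"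
    and inner: "\<forall>x \<in> set ys - {u, v}. degree E' x = 2"
    using assms(2) unfolding degree2_path_iff by blast
  have d: "distinct ys" "ys \<noteq> []" using ys(1) unfolding upath_def by auto
  have wn: "w \<notin> set ys" using w_notin_upath_E'[OF ys(1)] upath_length_ge_2[OF ys(1)] assms(1) ys(2,3) by simp
  show ?thesis
  proof (cases "successively (\<lambda>a b. {a, b} \<in> E) ys")
    case True
    then have "upath E ys" using d unfolding upath_iff_successively by simp
    moreover have "\<forall>x \<in> set ys - {u, v}. degree E x = 2"
    proof
      fix x assume "x \<in> set ys - {u, v}"
      moreover from this have "x \<noteq> w" using wn by auto
      ultimately show "degree E x = 2" using inner degree_E' by force
    qed
    ultimately show ?thesis unfolding degree2_path_iff using ys(2,3) by blast
  next
    case False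
    obtain as bs where ab: "ys = as @ bs" "as \<noteq> []" "bs \<noteq> []" "{last as, hd bs} = {p, q}"
      using upath_E'_not_E[OF ys(1) False] .
    have "upath E (as @ w # bs)" using upath_through_w[OF _ ab(2,3,4)] ys(1) ab(1) wn by simp
    moreover have "\<forall>x \<in> set (as @ w # bs) - {u, v}. degree E x = 2"
    proof
      fix x assume x: "x \<in> set (as @ w # bs) - {u, v}"
      show "degree E x = 2"
      proof (cases "x = w")
        case False
        then have "x \<in> set ys - {u, v}" using x ab(1) by auto
        then show ?thesis using inner degree_E'[OF False] by simp
      qed (use degree_w in simp)
    qed
    moreover have "hd (as @ w # bs) = u" "last (as @ w # bs) = v" using ab(1-3) ys(2,3) by simp_all
    ultimately show ?thesis unfolding degree2_path_iff by blast
  qed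
qed

lemma suppr_edges_E': "suppr_edges V' E' = suppr_edges V E"
proof -
  have "u \<noteq> w" if "u \<in> suppr_verts V E" for u using that degree_w unfolding suppr_verts_def by auto
  then have "degree2_path E' u v \<longleftrightarrow> degree2_path E u v"
    if "u \<in> suppr_verts V E" "v \<in> suppr_verts V E" "u \<noteq> v" for u v
    using that degree2_path_E degree2_path_E' by blast
  then show ?thesis unfolding suppr_edges_degree2_path suppr_verts_E' by blast
qed

end

lemma suppr_no_degree2:
  assumes "forest V E" and no2: "\<forall>v \<in> V. degree E v \<noteq> 2"
  shows "suppr_verts V E = V" "suppr_edges V E = E"
proof -
  show sv: "suppr_verts V E = V" unfolding suppr_verts_def using no2 by auto
  have ug: "ugraph V E" using assms(1) unfolding forest_def by blast
  show "suppr_edges V E = E"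
  proof (intro equalityI subsetI)
    fix e assume "e \<in> suppr_edges V E"
    then obtain u v xs where e: "e = {u, v}" "u \<noteq> v" and xs: "upath E xs" "hd xs = u" "last xs = v"
      and inner: "\<forall>x \<in> set xs - {u, v}. degree E x = 2"
      unfolding suppr_edges_degree2_path degree2_path_iff by blast
    have len: "length xs \<ge> 2" using upath_length_ge_2[OF xs(1)] xs(2,3) e(2) by simp
    then have "set xs \<subseteq> V" by (rule upath_set_subset[OF ug xs(1)])
    then have "set xs \<subseteq> {u, v}" using inner no2 by blast
    then have "card (set xs) \<le> card {u, v}" by (intro card_mono) simp_all
    moreover have "card (set xs) = length xs" using xs(1) distinct_card unfolding upath_def by blast
    ultimately have "length xs = 2" using len e(2) by simp
    then obtain a b where "xs = [a, b]"
      by (metis (no_types) length_0_conv length_Suc_conv numeral_2_eq_2)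
    then show "e \<in> E" using xs e(1) unfolding upath_def by auto
  next
    fix e assume e: "e \<in> E"
    obtain u v where uv: "u \<in> V" "v \<in> V" "u \<noteq> v" "e = {u, v}" using ugraph_edgeE[OF ug e] .
    have "degree2_path E u v"
      unfolding degree2_path_iff using upath_edge[of u v E] e uv(3,4) by (intro exI[of _ "[u, v]"]) auto
    then show "e \<in> suppr_edges V E" unfolding suppr_edges_degree2_path sv using uv by blast
  qed
qed

lemma pscore_suppr:
  "forest V E \<Longrightarrow> S \<noteq> {} \<Longrightarrow> f ` leaves V E \<subseteq> S \<Longrightarrow>
   pscore S f V E = pscore S f (suppr_verts V E) (suppr_edges V E)"
proof (induction "card {v \<in> V. degree E v = 2}" arbitrary: V E rule: less_induct)
  case less
  have ug: "ugraph V E" using less.prems(1) unfolding forest_def by blast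
  have finE: "finite E" using ugraph_finite_edges[OF ug] .
  show ?case
  proof (cases "\<exists>w \<in> V. degree E w = 2")
    case False
    then show ?thesis using suppr_no_degree2[OF less.prems(1)] by simp
  next
    case True
    then obtain w where w: "w \<in> V" "degree E w = 2" by blast
    then have "card {e \<in> E. w \<in> e} = 2" unfolding degree_def by simp
    then obtain e1 e2 where e12: "{e \<in> E. w \<in> e} = {e1, e2}" "e1 \<noteq> e2" unfolding card_2_iff by blast
    then have e1: "e1 \<in> E" "w \<in> e1" and e2: "e2 \<in> E" "w \<in> e2" by blast+
    obtain p where p: "e1 = {w, p}" using ugraph_edge_otherE[OF ug e1] by metis
    obtain q where q: "e2 = {w, q}" using ugraph_edge_otherE[OF ug e2] by metis
    interpret contraction: degree2_vertex V E w p q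
      using less.prems(1) w e1 e2 p q e12(2) by unfold_locales auto
    have "pscore S f V E = pscore S f contraction.V' contraction.E'"
      using contraction.pscore_E' less.prems(2,3) by blast
    also have "\<dots> = pscore S f (suppr_verts contraction.V' contraction.E') (suppr_edges contraction.V' contraction.E')"
      using less.hyps[OF contraction.card_degree2_E'_less contraction.forest_E' less.prems(2)]
        less.prems(3) contraction.leaves_E' by simp
    also have "\<dots> = pscore S f (suppr_verts V E) (suppr_edges V E)"
      unfolding contraction.suppr_verts_E' contraction.suppr_edges_E' ..
    finally show ?thesis .
  qed
qed

lemma pscore_span_eq_pscore_restr:
  assumes "tree_on X V E" "Y \<subseteq> X" "S \<noteq> {}" "f ` Y \<subseteq> S"
  shows "pscore S f (span_verts E Y) (span_edges E Y) = pscore S f (restr_verts E Y) (restr_edges E Y)"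
  unfolding restr_verts_def restr_edges_def
proof (rule pscore_suppr)
  show "forest (span_verts E Y) (span_edges E Y)"
    using forest_span tree_on_forest[OF assms(1)] tree_on_leaves_subset[OF assms(1)] assms(2) by blast
  show "f ` leaves (span_verts E Y) (span_edges E Y) \<subseteq> S"
    unfolding leaves_span_tree_on[OF assms(1,2)] by (rule assms(4))
qed (rule assms(3))

section \<open>The parsimony distance\<close>

lemma pscore_le_card:
  assumes "finite E" "f ` leaves V E \<subseteq> S" "S \<noteq> {}"
  shows "pscore S f V E \<le> card E"
proof -
  obtain g where "g \<in> extensions S f V (leaves V E)" "min_changes S f V E (leaves V E) = changes E g"
    using min_changes_attained[OF assms(2,3)] .
  then show ?thesis unfolding pscore_eq_min_changes using changes_le_card[OF assms(1)] by simp
qed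

lemma dMP_cong:
  assumes "\<And>S f. S \<noteq> {} \<Longrightarrow> f ` X \<subseteq> S \<Longrightarrow> pscore S f V1 E1 = pscore (S :: nat set) f V1' E1'"
    and "\<And>S f. S \<noteq> {} \<Longrightarrow> f ` X \<subseteq> S \<Longrightarrow> pscore S f V2 E2 = pscore (S :: nat set) f V2' E2'"
  shows "dMP t X V1 E1 V2 E2 = dMP t X V1' E1' V2' E2'"
proof -
  let ?gap = "\<lambda>V1 E1 V2 E2 S f. nat \<bar>int (pscore S f V1 E1) - int (pscore S f V2 E2)\<bar>"
  have gap: "?gap V1 E1 V2 E2 S f = ?gap V1' E1' V2' E2' S f" if "t_states t S" "f ` X \<subseteq> S" for S f
  proof -
    have "S \<noteq> {}" using that(1) unfolding t_states_def by simp
    then show ?thesis using assms(1)[OF _ that(2)] assms(2)[OF _ that(2)] by simp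
  qed
  have "{?gap V1 E1 V2 E2 S f | S f. t_states t S \<and> f ` X \<subseteq> S}
    = {?gap V1' E1' V2' E2' S f | S f. t_states t S \<and> f ` X \<subseteq> S}"
  proof (intro set_eqI iffI)
    fix x assume "x \<in> {?gap V1 E1 V2 E2 S f | S f. t_states t S \<and> f ` X \<subseteq> S}"
    then obtain S f where "x = ?gap V1 E1 V2 E2 S f" "t_states t S" "f ` X \<subseteq> S" by blast
    moreover from this have "x = ?gap V1' E1' V2' E2' S f" using gap by simp
    ultimately show "x \<in> {?gap V1' E1' V2' E2' S f | S f. t_states t S \<and> f ` X \<subseteq> S}" by blast
  next
    fix x assume "x \<in> {?gap V1' E1' V2' E2' S f | S f. t_states t S \<and> f ` X \<subseteq> S}"
    then obtain S f where "x = ?gap V1' E1' V2' E2' S f" "t_states t S" "f ` X \<subseteq> S" by blast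
    moreover from this have "x = ?gap V1 E1 V2 E2 S f" using gap by simp
    ultimately show "x \<in> {?gap V1 E1 V2 E2 S f | S f. t_states t S \<and> f ` X \<subseteq> S}" by blast
  qed
  then show ?thesis unfolding dMP_def by simp
qed

lemma pscore_gap_le_dMP:
  assumes "tree_on X V1 E1" "tree_on X V2 E2" "t_states t S" "f ` X \<subseteq> S"
  shows "nat \<bar>int (pscore S f V1 E1) - int (pscore S f V2 E2)\<bar> \<le> dMP t X V1 E1 V2 E2"
  unfolding dMP_def
proof (rule cSup_upper)
  show "nat \<bar>int (pscore S f V1 E1) - int (pscore S f V2 E2)\<bar>
    \<in> {nat \<bar>int (pscore S f V1 E1) - int (pscore S f V2 E2)\<bar> | S f. t_states t S \<and> f ` X \<subseteq> S}"
    using assms(3,4) by blast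
  have finite: "finite E1" "finite E2" using forest_finite tree_on_forest assms(1,2) by blast+
  have bound: "nat \<bar>int (pscore S f V1 E1) - int (pscore S f V2 E2)\<bar> \<le> card E1 + card E2"
    if "t_states t S" "f ` X \<subseteq> S" for S f
  proof -
    have "S \<noteq> {}" using that(1) unfolding t_states_def by simp
    then have "pscore S f V1 E1 \<le> card E1" "pscore S f V2 E2 \<le> card E2"
      using pscore_le_card[OF finite(1), of f V1 S] pscore_le_card[OF finite(2), of f V2 S] that(2)
      unfolding tree_on_leaves[OF assms(1)] tree_on_leaves[OF assms(2)] by simp_all
    then show ?thesis by linarith
  qed
  show "bdd_above {nat \<bar>int (pscore S f V1 E1) - int (pscore S f V2 E2)\<bar> | S f. t_states t S \<and> f ` X \<subseteq> S}"
    by (rule bdd_aboveI[of _ "card E1 + card E2"]) (use bound in blast)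
qed

lemma pscore_span_gap_le:
  assumes "tree_on X V1 E1" "tree_on X V2 E2" "Y \<subseteq> X" "S \<noteq> {}" "f ` Y \<subseteq> S"
  obtains f' where "f' ` X \<subseteq> S"
    "\<bar>int (pscore S f (span_verts E1 Y) (span_edges E1 Y)) - int (pscore S f (span_verts E2 Y) (span_edges E2 Y))\<bar>
     \<le> \<bar>int (pscore S f' V1 E1) - int (pscore S f' V2 E2)\<bar>"
proof -
  have XV: "X \<subseteq> V1" "X \<subseteq> V2" using tree_on_leaves_subset assms(1,2) by blast+
  have fin: "finite E1" "finite E2" using forest_finite tree_on_forest assms(1,2) by blast+
  have "finite (X - Y)" using finite_subset[OF XV(1)] forest_finite[OF tree_on_forest[OF assms(1)]] by blast
  moreover have "\<And>x. x \<in> X - Y \<Longrightarrow> x \<in> V1 \<and> x \<in> V2 \<and> degree E1 x \<le> 1 \<and> degree E2 x \<le> 1"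
    using XV tree_on_degree_leaf[OF assms(1)] tree_on_degree_leaf[OF assms(2)] by blast
  ultimately obtain f' where f': "f' ` (Y \<union> (X - Y)) \<subseteq> S"
    and gap: "min_changes_gap S f V1 E1 V2 E2 Y \<le> min_changes_gap S f' V1 E1 V2 E2 (Y \<union> (X - Y))"
    using min_changes_gap_extend[of "X - Y" Y f S E1 E2 V1 V2] assms(4,5) fin by blast
  have YX: "Y \<union> (X - Y) = X" using assms(3) by blast
  have "min_changes S f' V1 E1 X = pscore S f' V1 E1" "min_changes S f' V2 E2 X = pscore S f' V2 E2"
    unfolding pscore_eq_min_changes tree_on_leaves[OF assms(1)] tree_on_leaves[OF assms(2)] by simp_all
  then show ?thesis
    using that[OF f'[unfolded YX]] gap[unfolded YX min_changes_gap_def]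
    unfolding min_changes_eq_pscore_span[OF assms(1,3-5)] min_changes_eq_pscore_span[OF assms(2,3-5)]
    by simp
qed

lemma dMP_span_le:
  assumes "tree_on X V1 E1" "tree_on X V2 E2" "Y \<subseteq> X"
  shows "dMP t Y (span_verts E1 Y) (span_edges E1 Y) (span_verts E2 Y) (span_edges E2 Y) \<le> dMP t X V1 E1 V2 E2"
proof -
  let ?gap = "\<lambda>S f. nat \<bar>int (pscore S f (span_verts E1 Y) (span_edges E1 Y))
    - int (pscore S f (span_verts E2 Y) (span_edges E2 Y))\<bar>"
  have bound: "?gap S f \<le> dMP t X V1 E1 V2 E2" if ts: "t_states t S" and fY: "f ` Y \<subseteq> S" for S f
  proof -
    have "S \<noteq> {}" using ts unfolding t_states_def by simp
    then obtain f' where f': "f' ` X \<subseteq> S"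
      "\<bar>int (pscore S f (span_verts E1 Y) (span_edges E1 Y)) - int (pscore S f (span_verts E2 Y) (span_edges E2 Y))\<bar>
       \<le> \<bar>int (pscore S f' V1 E1) - int (pscore S f' V2 E2)\<bar>"
      using pscore_span_gap_le[OF assms _ fY] by blast
    then have "?gap S f \<le> nat \<bar>int (pscore S f' V1 E1) - int (pscore S f' V2 E2)\<bar>" by simp
    also have "\<dots> \<le> dMP t X V1 E1 V2 E2" by (rule pscore_gap_le_dMP[OF assms(1,2) ts f'(1)])
    finally show ?thesis .
  qed
  let ?A = "{?gap S f | S f. t_states t S \<and> f ` Y \<subseteq> S}"
  have "Sup ?A \<le> dMP t X V1 E1 V2 E2"
  proof (cases "?A = {}")
    case False
    show ?thesis
    proof (rule cSup_least[OF False])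
      fix x assume "x \<in> ?A"
      then obtain S f where "x = ?gap S f" "t_states t S" "f ` Y \<subseteq> S" by blast
      then show "x \<le> dMP t X V1 E1 V2 E2" using bound by simp
    qed
  next
    case True
    show ?thesis unfolding True by simp
  qed
  then show ?thesis unfolding dMP_def[of t Y] .
qed

theorem mainTheorem4:
  fixes X Y V1 V2 :: "'v set" and E1 E2 :: "'v set set" and t :: enat
  assumes "tree_on X V1 E1" and "tree_on X V2 E2" and "Y \<subseteq> X" and "t \<ge> 2"
  shows "dMP t Y (span_verts E1 Y) (span_edges E1 Y) (span_verts E2 Y) (span_edges E2 Y)
           = dMP t Y (restr_verts E1 Y) (restr_edges E1 Y) (restr_verts E2 Y) (restr_edges E2 Y)
       \<and> dMP t Y (restr_verts E1 Y) (restr_edges E1 Y) (restr_verts E2 Y) (restr_edges E2 Y)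
           \<le> dMP t X V1 E1 V2 E2"
proof -
  have "dMP t Y (span_verts E1 Y) (span_edges E1 Y) (span_verts E2 Y) (span_edges E2 Y)
      = dMP t Y (restr_verts E1 Y) (restr_edges E1 Y) (restr_verts E2 Y) (restr_edges E2 Y)"
    using pscore_span_eq_pscore_restr[OF assms(1,3)] pscore_span_eq_pscore_restr[OF assms(2,3)]
    by (rule dMP_cong)
  then show ?thesis using dMP_span_le[OF assms(1-3), of t] by simp
qed

end
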